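(* Let $n\in\mathbb N$ be such that $n+1$ is an Hadamard number. Then there exists a regular $n$-dimensional simplex $S\subset Q_n$ with the following properties: (1) $\mathrm{ver}(S)\subset \mathrm{ver}(Q_n)$; (2) $\xi_n=\xi(S)=\alpha(S)=n$; (3) $d_1(S)=\dots=d_n(S)=1$; (4) the simplex $nS$ is circumscribed around $Q_n$ in such a way that each $(n-1)$-dimensional face of $nS$ contains exactly one vertex of $Q_n$.
   Context: $Q_n=[0,1]^n$. An Hadamard matrix of order $m$ is an $m\times m$ matrix $H$ with entries $\pm1$ satisfying $H^{-1}=\frac1m H^T$; $m$ is an Hadamard number if such a matrix exists. For a convex body $\Omega\subset\mathbb R^n$ (compact convex set with nonempty interior) and $\sigma>0$, $\sigma\Omega$ denotes the image of $\Omega$ under the homothety with center at the center of gravity of $\Omega$ and ratio $\sigma$. For convex bodies $\Omega_1,\Omega_2$, $\xi(\Omega_1;\Omega_2)$ is the minimal $\sigma\ge1$ with $\Omega_1\subset\sigma\Omega_2$, and $\alpha(\Omega_1;\Omega_2)$ is the minimal $\sigma>0$ such that $\Omega_1$ is contained in a translate of $\sigma\Omega_2$. For a simplex $S$, $\xi(S):=\xi(Q_n;S)$, $\alpha(S):=\alpha(Q_n;S)$, and $\xi_n:=\min\{\xi(S): S\subset Q_n \text{ a nondegenerate } n\text{-dimensional simplex}\}$. The $i$th axial diameter $d_i(\Omega)$ is the maximal length of a segment contained in $\Omega$ and parallel to the $x_i$-axis. A simplex is circumscribed around a convex body $\Omega$ if $\Omega\subset S$ and each $(n-1)$-dimensional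 face of $S$ contains a point of $\Omega$. $\mathrm{ver}(\cdot)$ denotes the vertex set of a polytope. *)

theory Defs
  imports "HOL-Analysis.Analysis"
begin

text \<open>Hadamard number: there is an m x m matrix H (indices 0..<m) with entries +-1
  and H^{-1} = (1/m) H^T, i.e. H H^T = m I and H^T H = m I.\<close>
definition hadamard_number :: "nat \<Rightarrow> bool" where
  "hadamard_number m \<longleftrightarrow> (\<exists>H :: nat \<Rightarrow> nat \<Rightarrow> real.
     (\<forall>i<m. \<forall>j<m. H i j = 1 \<or> H i j = -1) \<and>
     (\<forall>i<m. \<forall>k<m. (\<Sum>j<m. H i j * H k j) = (if i = k then real m else 0)) \<and>
     (\<forall>i<m. \<forall>k<m. (\<Sum>j<m. H j i * H j k) = (if i = k then real m else 0)))"

definition unit_cube :: "(real ^ 'n) set" where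
  "unit_cube = {x. \<forall>i. 0 \<le> x $ i \<and> x $ i \<le> 1}"

definition ver :: "(real ^ 'n) set \<Rightarrow> (real ^ 'n) set" where
  "ver P = {v. v extreme_point_of P}"

definition nondeg_simplex :: "(real ^ 'n) set \<Rightarrow> bool" where
  "nondeg_simplex S \<longleftrightarrow> (\<exists>V. finite V \<and> card V = CARD('n) + 1 \<and> \<not> affine_dependent V \<and> S = convex hull V)"

definition regular_simplex :: "(real ^ 'n) set \<Rightarrow> bool" where
  "regular_simplex S \<longleftrightarrow> nondeg_simplex S \<and>
     (\<exists>d. \<forall>u\<in>ver S. \<forall>v\<in>ver S. u \<noteq> v \<longrightarrow> dist u v = d)"

definition center_of_gravity :: "(real ^ 'n) set \<Rightarrow> real ^ 'n" where
  "center_of_gravity \<Omega> = (1 / measure lebesgue \<Omega>) *\<^sub>R integral \<Omega> (\<lambda>x. x)"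

definition homot :: "real \<Rightarrow> (real ^ 'n) set \<Rightarrow> (real ^ 'n) set" where
  "homot \<sigma> \<Omega> = (\<lambda>x. center_of_gravity \<Omega> + \<sigma> *\<^sub>R (x - center_of_gravity \<Omega>)) ` \<Omega>"

definition xi_rel :: "(real ^ 'n) set \<Rightarrow> (real ^ 'n) set \<Rightarrow> real" where
  "xi_rel \<Omega>1 \<Omega>2 = Inf {\<sigma>. \<sigma> \<ge> 1 \<and> \<Omega>1 \<subseteq> homot \<sigma> \<Omega>2}"

definition alpha_rel :: "(real ^ 'n) set \<Rightarrow> (real ^ 'n) set \<Rightarrow> real" where
  "alpha_rel \<Omega>1 \<Omega>2 = Inf {\<sigma>. \<sigma> > 0 \<and> (\<exists>t. \<Omega>1 \<subseteq> (\<lambda>x. t + x) ` homot \<sigma> \<Omega>2)}"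

definition xi_simplex :: "(real ^ 'n) set \<Rightarrow> real" where
  "xi_simplex S = xi_rel (unit_cube :: (real ^ 'n) set) S"

definition alpha_simplex :: "(real ^ 'n) set \<Rightarrow> real" where
  "alpha_simplex S = alpha_rel (unit_cube :: (real ^ 'n) set) S"

definition xi_n :: "'n::finite itself \<Rightarrow> real" where
  "xi_n _ = Inf {xi_simplex S | S :: (real ^ 'n) set. nondeg_simplex S \<and> S \<subseteq> unit_cube}"

definition axial_diam :: "'n \<Rightarrow> (real ^ 'n) set \<Rightarrow> real" where
  "axial_diam i \<Omega> = Sup {dist a b | a b. closed_segment a b \<subseteq> \<Omega> \<and> (\<forall>j. j \<noteq> i \<longrightarrow> a $ j = b $ j)}"

definition circumscribed :: "(real ^ 'n) set \<Rightarrow> (real ^ 'n) set \<Rightarrow> bool" where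
  "circumscribed S \<Omega> \<longleftrightarrow> \<Omega> \<subseteq> S \<and> (\<forall>F. F facet_of S \<longrightarrow> F \<inter> \<Omega> \<noteq> {})"

end

theory Submission
  imports Defs
begin

text \<open>Normalise a Hadamard matrix of order \<open>n + 1\<close> so that its first column consists of ones
  and delete that column: the rows \<open>h\<^sub>0, \<dots>, h\<^sub>n\<close> are \<open>\<plusminus>1\<close>-vectors with pairwise inner products
  \<open>-1\<close>. The cube vertices \<open>v\<^sub>k = (1 - h\<^sub>k) / 2\<close> are then at mutual distance \<open>\<surd>((n + 1) / 2)\<close> and
  span a regular simplex \<open>S\<close> with barycentric coordinates
  \<open>\<lambda>\<^sub>k(x) = (1 + \<langle>h\<^sub>k, 1 - 2x\<rangle>) / (n + 1)\<close>; its centre of gravity is the centre of the cube.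
  On the cube \<open>\<lambda>\<^sub>k \<ge> (1 - n) / (n + 1)\<close>, which says exactly that \<open>Q\<^sub>n \<subseteq> nS\<close>, and among the cube
  vertices equality holds only at \<open>(1 + h\<^sub>k) / 2\<close>, so every facet of \<open>nS\<close> contains exactly one
  of them.

  Conversely, if \<open>Q\<^sub>n \<subseteq> a + \<sigma>S\<close> for some simplex \<open>S \<subseteq> Q\<^sub>n\<close>, then \<open>\<sigma> \<ge> n\<close>: evaluate the barycentric
  coordinates at cube vertices chosen coordinatewise according to their signs and add up. Hence
  \<open>\<xi>(S) = \<alpha>(S) = \<xi>\<^sub>n = n\<close>.

  That the centre of gravity of a simplex is the mean of its vertices needs an argument of its own:
  all barycentric coordinates have the same integral, because the level sets \<open>{\<lambda>\<^sub>v \<ge> s}\<close> are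
  homothetic copies of the simplex of volume \<open>(1 - s)\<^sup>n |S|\<close>, whatever the vertex \<open>v\<close>.\<close>

section \<open>Barycentric coordinates and the centre of gravity of a simplex\<close>

lemma grid_count_bounds:
  fixes t :: real
  assumes "0 \<le> t" "t \<le> 1" "N > 0"
  shows "(\<Sum>i\<in>{1..<N}. if real i / real N \<le> t then 1 else 0) \<le> real N * t"
    and "real N * t \<le> (\<Sum>i<N. if real i / real N \<le> t then 1 else 0)"
proof -
  define k where "k = nat \<lfloor>real N * t\<rfloor>"
  have below_iff: "real i / real N \<le> t \<longleftrightarrow> i \<le> k" for i
  proof -
    have "real i / real N \<le> t \<longleftrightarrow> int i \<le> \<lfloor>real N * t\<rfloor>"
      using assms(3) by (simp add: divide_le_eq mult.commute le_floor_iff)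
    then show ?thesis
      using assms by (simp add: k_def le_nat_iff)
  qed
  have "(\<Sum>i\<in>{1..<N}. if real i / real N \<le> t then 1 else 0::real) = real (card ({1..<N} \<inter> {..k}))"
    by (simp add: below_iff sum.If_cases atMost_def)
  also have "\<dots> \<le> real (card {1..k})"
    by (intro of_nat_mono card_mono) auto
  also have "\<dots> \<le> real N * t"
    using assms by (simp add: k_def)
  finally show "(\<Sum>i\<in>{1..<N}. if real i / real N \<le> t then 1 else 0) \<le> real N * t" .
  have "{..<N} \<inter> {i. i \<le> k} = {..<min N (Suc k)}"
    by auto
  then have "(\<Sum>i<N. if real i / real N \<le> t then 1 else 0::real) = real (min N (Suc k))"
    by (simp add: below_iff sum.If_cases)
  moreover have "real N * t \<le> real N" "real N * t < real (Suc k)"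
    using assms by (auto simp: k_def mult_left_le) linarith
  ultimately show "real N * t \<le> (\<Sum>i<N. if real i / real N \<le> t then 1 else 0)"
    by (simp add: min_def)
qed

definition barycentric :: "'a::real_vector set \<Rightarrow> 'a \<Rightarrow> 'a \<Rightarrow> real" where
  "barycentric V x = (SOME u. sum u V = 1 \<and> (\<Sum>v\<in>V. u v *\<^sub>R v) = x)"

definition centroid :: "'a::real_vector set \<Rightarrow> 'a" where
  "centroid V = (1 / real (card V)) *\<^sub>R \<Sum>V"

locale simplex_frame =
  fixes V :: "'a::euclidean_space set"
  assumes finite_frame: "finite V"
    and independent_frame: "\<not> affine_dependent V"
    and card_frame: "card V = DIM('a) + 1"
begin

lemma affine_hull_frame: "affine hull V = UNIV"
  using aff_dim_affine_independent[OF independent_frame] card_frame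
  by (intro affine_hull_UNIV) simp

lemma barycentric_sum: "sum (barycentric V x) V = 1"
  and barycentric_combination: "(\<Sum>v\<in>V. barycentric V x v *\<^sub>R v) = x"
proof -
  have "\<exists>u. sum u V = 1 \<and> (\<Sum>v\<in>V. u v *\<^sub>R v) = x"
    using affine_hull_frame affine_hull_finite[OF finite_frame] by blast
  then have "sum (barycentric V x) V = 1 \<and> (\<Sum>v\<in>V. barycentric V x v *\<^sub>R v) = x"
    unfolding barycentric_def by (rule someI_ex)
  then show "sum (barycentric V x) V = 1" "(\<Sum>v\<in>V. barycentric V x v *\<^sub>R v) = x"
    by auto
qed

lemma barycentric_unique:
  assumes "sum u V = 1" "(\<Sum>v\<in>V. u v *\<^sub>R v) = x" "v \<in> V"
  shows "barycentric V x v = u v"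
proof -
  define d where "d w = u w - barycentric V x w" for w
  have "sum d V = 0" "(\<Sum>w\<in>V. d w *\<^sub>R w) = 0"
    using assms barycentric_sum barycentric_combination
    by (simp_all add: d_def sum_subtractf scaleR_diff_left)
  then have "\<forall>w\<in>V. d w = 0"
    using independent_frame affine_dependent_explicit_finite[OF finite_frame] by blast
  then show ?thesis
    using assms(3) by (simp add: d_def)
qed

lemma barycentric_affine:
  assumes "v \<in> V"
  shows "barycentric V ((1 - s) *\<^sub>R x + s *\<^sub>R y) v = (1 - s) * barycentric V x v + s * barycentric V y v"
proof (rule barycentric_unique[OF _ _ assms])
  show "(\<Sum>w\<in>V. (1 - s) * barycentric V x w + s * barycentric V y w) = 1"
    by (simp add: sum.distrib barycentric_sum flip: sum_distrib_left)
  have "(\<Sum>w\<in>V. ((1 - s) * barycentric V x w + s * barycentric V y w) *\<^sub>R w)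
      = (1 - s) *\<^sub>R (\<Sum>w\<in>V. barycentric V x w *\<^sub>R w) + s *\<^sub>R (\<Sum>w\<in>V. barycentric V y w *\<^sub>R w)"
    by (simp add: scaleR_add_left sum.distrib scaleR_sum_right)
  then show "(\<Sum>w\<in>V. ((1 - s) * barycentric V x w + s * barycentric V y w) *\<^sub>R w) = (1 - s) *\<^sub>R x + s *\<^sub>R y"
    by (simp add: barycentric_combination)
qed

lemma barycentric_vertex:
  assumes "w \<in> V" "v \<in> V"
  shows "barycentric V w v = (if v = w then 1 else 0)"
  by (rule barycentric_unique[OF _ _ assms(2)])
    (use assms(1) finite_frame in \<open>simp_all add: if_distrib[of "\<lambda>c. c *\<^sub>R _"] cong: if_cong\<close>)

lemma barycentric_centroid:
  assumes "v \<in> V"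
  shows "barycentric V (centroid V) v = 1 / real (card V)"
  by (rule barycentric_unique[OF _ _ assms])
    (use card_frame in \<open>simp_all add: centroid_def scaleR_sum_right\<close>)

lemma linear_barycentric:
  assumes "v \<in> V"
  shows "linear (\<lambda>x. barycentric V x v - barycentric V 0 v)"
proof -
  have scale: "barycentric V (c *\<^sub>R x) v = (1 - c) * barycentric V 0 v + c * barycentric V x v" for c x
    using barycentric_affine[OF assms, of c 0 x] by simp
  have "barycentric V (x + y) v = (1 / 2) * barycentric V (2 *\<^sub>R x) v + (1 / 2) * barycentric V (2 *\<^sub>R y) v" for x y
    using barycentric_affine[OF assms, of "1/2" "2 *\<^sub>R x" "2 *\<^sub>R y"] by simp
  then show ?thesis
    by unfold_locales (simp_all add: scale algebra_simps)
qed

lemma continuous_on_barycentric: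
  assumes "v \<in> V"
  shows "continuous_on A (\<lambda>x. barycentric V x v)"
proof -
  have "continuous_on A (\<lambda>x. (barycentric V x v - barycentric V 0 v) + barycentric V 0 v)"
    using linear_barycentric[OF assms]
    by (intro continuous_intros linear_continuous_on) (simp add: linear_conv_bounded_linear)
  then show ?thesis
    by simp
qed

lemma convex_hull_frame: "convex hull V = {x. \<forall>v\<in>V. 0 \<le> barycentric V x v}"
proof (intro set_eqI iffI)
  fix x assume "x \<in> convex hull V"
  then obtain u where "\<forall>v\<in>V. 0 \<le> u v" "sum u V = 1" "(\<Sum>v\<in>V. u v *\<^sub>R v) = x"
    using convex_hull_finite[OF finite_frame] by auto
  then show "x \<in> {x. \<forall>v\<in>V. 0 \<le> barycentric V x v}"
    using barycentric_unique by auto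
next
  fix x assume "x \<in> {x. \<forall>v\<in>V. 0 \<le> barycentric V x v}"
  then show "x \<in> convex hull V"
    using convex_hull_finite[OF finite_frame] barycentric_sum barycentric_combination by auto
qed

lemma convex_hull_frame_minus:
  assumes "w \<in> V"
  shows "convex hull (V - {w}) = {x \<in> convex hull V. barycentric V x w = 0}"
proof (intro set_eqI iffI)
  fix x assume "x \<in> convex hull (V - {w})"
  then obtain u where u: "\<forall>v\<in>V - {w}. 0 \<le> u v" "sum u (V - {w}) = 1" "(\<Sum>v\<in>V - {w}. u v *\<^sub>R v) = x"
    using convex_hull_finite[of "V - {w}"] finite_frame by auto
  define u' where "u' v = (if v = w then 0 else u v)" for v
  have "sum u' V = 1" "(\<Sum>v\<in>V. u' v *\<^sub>R v) = x"
    using u(2,3) by (auto simp: u'_def sum.remove[OF finite_frame assms] intro!: sum.cong)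
  then have "barycentric V x v = u' v" if "v \<in> V" for v
    using barycentric_unique that by blast
  then show "x \<in> {x \<in> convex hull V. barycentric V x w = 0}"
    using u(1) assms by (auto simp: convex_hull_frame u'_def)
next
  fix x assume x: "x \<in> {x \<in> convex hull V. barycentric V x w = 0}"
  then have "sum (barycentric V x) (V - {w}) = 1" "(\<Sum>v\<in>V - {w}. barycentric V x v *\<^sub>R v) = x"
    using sum.remove[OF finite_frame assms, of "barycentric V x"]
      sum.remove[OF finite_frame assms, of "\<lambda>v. barycentric V x v *\<^sub>R v"]
    by (simp_all add: barycentric_sum barycentric_combination)
  then show "x \<in> convex hull (V - {w})"
    using x convex_hull_finite[of "V - {w}"] finite_frame by (auto simp: convex_hull_frame)
qed

lemma barycentric_le_1:
  assumes "x \<in> convex hull V" "v \<in> V"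
  shows "barycentric V x v \<le> 1"
  using member_le_sum[of v V "barycentric V x"] assms finite_frame
  by (simp add: convex_hull_frame barycentric_sum)

lemma ball_centroid_subset: "\<exists>r>0. ball (centroid V) r \<subseteq> convex hull V"
proof -
  have "open (\<Inter>v\<in>V. {x. 0 < barycentric V x v})"
    using finite_frame by (intro open_INT ballI open_Collect_less continuous_on_const continuous_on_barycentric) auto
  moreover have "centroid V \<in> (\<Inter>v\<in>V. {x. 0 < barycentric V x v})"
    using barycentric_centroid card_frame by auto
  ultimately obtain r where "r > 0" "ball (centroid V) r \<subseteq> (\<Inter>v\<in>V. {x. 0 < barycentric V x v})"
    by (meson open_contains_ball)
  then show ?thesis
    by (intro exI[of _ r]) (auto simp: convex_hull_frame less_imp_le)
qed

lemma compact_simplex: "compact (convex hull V)"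
  by (simp add: compact_convex_hull finite_imp_compact finite_frame)

lemma measure_simplex_pos: "0 < measure lebesgue (convex hull V)"
proof -
  obtain r where r: "r > 0" "ball (centroid V) r \<subseteq> convex hull V"
    using ball_centroid_subset by blast
  then have "measure lebesgue (ball (centroid V) r) \<le> measure lebesgue (convex hull V)"
    by (intro measure_mono_fmeasurable lmeasurable_compact compact_simplex) auto
  moreover have "0 < measure lebesgue (ball (centroid V) r)"
    using content_ball_pos[OF r(1)] by (simp add: measure_completion)
  ultimately show ?thesis
    by linarith
qed

lemma barycentric_level_set:
  assumes "v \<in> V" "0 \<le> s" "s < 1"
  shows "{x \<in> convex hull V. s \<le> barycentric V x v} = (\<lambda>x. (1 - s) *\<^sub>R x + s *\<^sub>R v) ` (convex hull V)"
proof (intro set_eqI iffI)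
  fix y assume y: "y \<in> {x \<in> convex hull V. s \<le> barycentric V x v}"
  define x where "x = (1 / (1 - s)) *\<^sub>R (y - s *\<^sub>R v)"
  have y_eq: "y = (1 - s) *\<^sub>R x + s *\<^sub>R v"
    using assms by (simp add: x_def)
  have eq: "(1 - s) * barycentric V x w + s * barycentric V v w = barycentric V y w" if "w \<in> V" for w
    using barycentric_affine[OF that, of s x v] by (simp add: y_eq add.commute)
  have "0 \<le> (1 - s) * barycentric V x w" if "w \<in> V" for w
    using eq[OF that] that y barycentric_vertex[OF assms(1) that] by (cases "w = v") (auto simp: convex_hull_frame)
  then have "0 \<le> barycentric V x w" if "w \<in> V" for w
    using that assms(3) by (simp add: zero_le_mult_iff)
  then show "y \<in> (\<lambda>x. (1 - s) *\<^sub>R x + s *\<^sub>R v) ` (convex hull V)"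
    using y_eq by (auto simp: convex_hull_frame)
next
  fix y assume "y \<in> (\<lambda>x. (1 - s) *\<^sub>R x + s *\<^sub>R v) ` (convex hull V)"
  then obtain x where x: "\<forall>w\<in>V. 0 \<le> barycentric V x w" and y_eq: "y = (1 - s) *\<^sub>R x + s *\<^sub>R v"
    by (auto simp: convex_hull_frame)
  have eq: "barycentric V y w = (1 - s) * barycentric V x w + s * barycentric V v w" if "w \<in> V" for w
    using barycentric_affine[OF that, of s x v] by (simp add: y_eq add.commute)
  have "0 \<le> barycentric V y w" if "w \<in> V" for w
  proof -
    have "0 \<le> (1 - s) * barycentric V x w" "0 \<le> s * barycentric V v w"
      using x that assms barycentric_vertex[OF assms(1) that] by auto
    then show ?thesis
      using eq[OF that] by linarith
  qed
  moreover have "s \<le> barycentric V y v"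
  proof -
    have "0 \<le> (1 - s) * barycentric V x v"
      using x assms by auto
    then show ?thesis
      using eq[OF assms(1)] barycentric_vertex[OF assms(1,1)] by simp
  qed
  ultimately show "y \<in> {x \<in> convex hull V. s \<le> barycentric V x v}"
    by (simp add: convex_hull_frame)
qed

lemma has_integral_indicator_level_set:
  assumes "v \<in> V" "0 \<le> s" "s < 1"
  shows "(indicator {x \<in> convex hull V. s \<le> barycentric V x v} has_integral
           (1 - s) ^ DIM('a) * measure lebesgue (convex hull V)) (convex hull V)"
proof -
  let ?E = "{x \<in> convex hull V. s \<le> barycentric V x v}"
  have E_eq: "?E = (\<lambda>x. (1 - s) *\<^sub>R x + s *\<^sub>R v) ` (convex hull V)"
    by (rule barycentric_level_set[OF assms])
  have "?E \<in> lmeasurable"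
    unfolding E_eq by (intro lmeasurable_compact compact_continuous_image compact_simplex continuous_intros)
  moreover have "measure lebesgue ?E = (1 - s) ^ DIM('a) * measure lebesgue (convex hull V)"
    unfolding E_eq measure_lebesgue_affine using assms by simp
  moreover have "?E \<inter> convex hull V = ?E"
    by blast
  ultimately show ?thesis
    using integral_indicator[of ?E "convex hull V"] integrable_on_indicator[of ?E "convex hull V"]
    by (simp add: has_integral_iff)
qed

lemma integrable_barycentric:
  assumes "v \<in> V"
  shows "(\<lambda>x. barycentric V x v) integrable_on convex hull V"
proof -
  have "set_integrable lborel (convex hull V) (\<lambda>x. barycentric V x v)"
    unfolding set_integrable_def
    by (rule borel_integrable_compact[OF compact_simplex continuous_on_barycentric[OF assms]])
  then show ?thesis
    by (rule set_borel_integral_eq_integral(1))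
qed

text \<open>Counting the level sets \<open>{barycentric V x v \<ge> i / N}\<close> that contain \<open>x\<close> approximates
  \<open>N * barycentric V x v\<close>; integrating gives Riemann sums of \<open>(1 - s) ^ DIM('a)\<close> that do not
  depend on the vertex \<open>v\<close>.\<close>
lemma integral_barycentric_bounds:
  assumes "v \<in> V" "N > 0"
  defines "M \<equiv> measure lebesgue (convex hull V)"
  shows "(\<Sum>i\<in>{1..<N}. (1 - real i / real N) ^ DIM('a) * M)
           \<le> real N * integral (convex hull V) (\<lambda>x. barycentric V x v)"
    and "real N * integral (convex hull V) (\<lambda>x. barycentric V x v)
           \<le> (\<Sum>i<N. (1 - real i / real N) ^ DIM('a) * M)"
proof -
  let ?E = "\<lambda>i. {x \<in> convex hull V. real i / real N \<le> barycentric V x v}"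
  have count: "((\<lambda>x. \<Sum>i\<in>I. indicator (?E i) x) has_integral
                 (\<Sum>i\<in>I. (1 - real i / real N) ^ DIM('a) * M)) (convex hull V)"
    if "I \<subseteq> {..<N}" for I
    using that finite_subset[OF that] assms(1,2) unfolding M_def
    by (intro has_integral_sum has_integral_indicator_level_set) auto
  have pointwise: "(\<Sum>i\<in>I. indicator (?E i) x) = (\<Sum>i\<in>I. if real i / real N \<le> barycentric V x v then 1 else 0 :: real)"
    if "x \<in> convex hull V" for I x
    using that by (intro sum.cong) (auto simp: indicator_def)
  have bounds: "0 \<le> barycentric V x v" "barycentric V x v \<le> 1" if "x \<in> convex hull V" for x
    using that assms(1) barycentric_le_1 by (auto simp: convex_hull_frame)
  have integral: "((\<lambda>x. real N * barycentric V x v) has_integral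
                    real N * integral (convex hull V) (\<lambda>x. barycentric V x v)) (convex hull V)"
    by (intro has_integral_mult_right integrable_integral integrable_barycentric assms)
  show "(\<Sum>i\<in>{1..<N}. (1 - real i / real N) ^ DIM('a) * M)
           \<le> real N * integral (convex hull V) (\<lambda>x. barycentric V x v)"
  proof (rule has_integral_le[OF count integral])
    fix x assume "x \<in> convex hull V"
    then show "(\<Sum>i\<in>{1..<N}. indicator (?E i) x) \<le> real N * barycentric V x v"
      using pointwise grid_count_bounds(1)[OF bounds assms(2)] by simp
  qed auto
  show "real N * integral (convex hull V) (\<lambda>x. barycentric V x v)
           \<le> (\<Sum>i<N. (1 - real i / real N) ^ DIM('a) * M)"
  proof (rule has_integral_le[OF integral count])
    fix x assume "x \<in> convex hull V"
    then show "real N * barycentric V x v \<le> (\<Sum>i<N. indicator (?E i) x)"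
      using pointwise grid_count_bounds(2)[OF bounds assms(2)] by simp
  qed auto
qed

lemma integral_barycentric_eq:
  assumes "v \<in> V" "w \<in> V"
  shows "integral (convex hull V) (\<lambda>x. barycentric V x v) = integral (convex hull V) (\<lambda>x. barycentric V x w)"
proof (rule ccontr)
  let ?M = "measure lebesgue (convex hull V)"
  let ?I = "\<lambda>v. integral (convex hull V) (\<lambda>x. barycentric V x v)"
  assume "?I v \<noteq> ?I w"
  then have d: "\<bar>?I v - ?I w\<bar> > 0"
    by simp
  obtain N :: nat where N: "?M / \<bar>?I v - ?I w\<bar> < real N"
    using reals_Archimedean2 by blast
  moreover have "0 < ?M / \<bar>?I v - ?I w\<bar>"
    using measure_simplex_pos d by simp
  ultimately have "N > 0"
    by (cases "N = 0") auto
  have "(\<Sum>i<N. (1 - real i / real N) ^ DIM('a) * ?M) = ?M + (\<Sum>i\<in>{1..<N}. (1 - real i / real N) ^ DIM('a) * ?M)"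
    using \<open>N > 0\<close> by (simp add: sum.atLeast1_atMost_eq lessThan_atLeast0 sum.atLeast_Suc_lessThan)
  then have "\<bar>real N * ?I v - real N * ?I w\<bar> \<le> ?M"
    using integral_barycentric_bounds[OF assms(1) \<open>N > 0\<close>] integral_barycentric_bounds[OF assms(2) \<open>N > 0\<close>]
    unfolding abs_le_iff by linarith
  then have "real N * \<bar>?I v - ?I w\<bar> \<le> ?M"
    by (simp add: abs_mult flip: right_diff_distrib)
  then show False
    using N d by (simp add: divide_less_eq mult.commute)
qed

lemma integral_id_simplex:
  "integral (convex hull V) (\<lambda>x. x) = (measure lebesgue (convex hull V) / real (card V)) *\<^sub>R \<Sum>V"
proof -
  obtain v0 where v0: "v0 \<in> V"
    using card_frame by fastforce
  let ?I = "integral (convex hull V) (\<lambda>x. barycentric V x v0)"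
  have I: "integral (convex hull V) (\<lambda>x. barycentric V x v) = ?I" if "v \<in> V" for v
    using integral_barycentric_eq[OF that v0] .
  have "measure lebesgue (convex hull V) = integral (convex hull V) (\<lambda>x. \<Sum>v\<in>V. barycentric V x v)"
    by (simp add: barycentric_sum lmeasure_integral lmeasurable_compact compact_simplex)
  also have "\<dots> = real (card V) * ?I"
    by (simp add: integral_sum[OF finite_frame integrable_barycentric] I)
  finally have M: "measure lebesgue (convex hull V) = real (card V) * ?I" .
  have "((\<lambda>x. \<Sum>v\<in>V. barycentric V x v *\<^sub>R v) has_integral (\<Sum>v\<in>V. ?I *\<^sub>R v)) (convex hull V)"
    by (intro has_integral_sum[OF finite_frame] has_integral_scaleR_left)
      (use I integrable_integral[OF integrable_barycentric] in fastforce)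
  then have "integral (convex hull V) (\<lambda>x. x) = ?I *\<^sub>R \<Sum>V"
    by (simp add: barycentric_combination integral_unique scaleR_sum_right)
  moreover have "card V > 0"
    using card_frame by simp
  ultimately show ?thesis
    unfolding M by simp
qed

end

lemma center_of_gravity_simplex:
  fixes V :: "(real ^ 'n) set"
  assumes "simplex_frame V"
  shows "center_of_gravity (convex hull V) = centroid V"
proof -
  interpret simplex_frame V by fact
  have "measure lebesgue (convex hull V) > 0" "card V > 0"
    using measure_simplex_pos card_frame by auto
  then show ?thesis
    by (simp add: center_of_gravity_def centroid_def integral_id_simplex)
qed

lemma affine_independent_affinity:
  fixes V :: "'a::euclidean_space set"
  assumes "\<not> affine_dependent V" "c \<noteq> 0"
  shows "\<not> affine_dependent ((\<lambda>x. a + c *\<^sub>R x) ` V)"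
proof -
  have inj: "inj ((*\<^sub>R) c :: 'a \<Rightarrow> 'a)"
    using assms(2) by (auto intro!: injI)
  have "card ((*\<^sub>R) c ` V) = card V" "aff_dim ((*\<^sub>R) c ` V) = aff_dim V"
    using card_image[OF inj_on_subset[OF inj subset_UNIV]] aff_dim_injective_linear_image[OF linear_scale_self inj]
    by auto
  then have "\<not> affine_dependent ((*\<^sub>R) c ` V)"
    using assms(1) by (simp add: affine_independent_iff_card)
  moreover have "(\<lambda>x. a + c *\<^sub>R x) ` V = (\<lambda>x. a + x) ` ((*\<^sub>R) c ` V)"
    by (simp add: image_image)
  ultimately show ?thesis
    using affine_dependent_translation_eq by metis
qed

section \<open>Simplices in the unit cube\<close>

lemma unit_cube_eq_cbox: "(unit_cube :: (real ^ 'n) set) = cbox 0 1"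
  by (auto simp: unit_cube_def mem_box_cart)

lemma convex_unit_cube: "convex (unit_cube :: (real ^ 'n) set)"
  by (simp add: unit_cube_eq_cbox)

lemma mem_ver_unit_cube: "x \<in> ver (unit_cube :: (real ^ 'n) set) \<longleftrightarrow> (\<forall>i. x $ i = 0 \<or> x $ i = 1)"
proof
  assume x: "x \<in> ver unit_cube"
  then have x_cube: "x \<in> unit_cube" and extreme: "\<forall>a\<in>unit_cube. \<forall>b\<in>unit_cube. x \<notin> open_segment a b"
    by (auto simp: ver_def extreme_point_of_def)
  show "\<forall>i. x $ i = 0 \<or> x $ i = 1"
  proof (rule ccontr)
    assume "\<not> (\<forall>i. x $ i = 0 \<or> x $ i = 1)"
    then obtain i where "0 < x $ i" "x $ i < 1"
      using x_cube by (force simp: unit_cube_def less_le)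
    then obtain t where t: "0 < t" "t \<le> x $ i" "t \<le> 1 - x $ i"
      by (metis diff_gt_0_iff_gt min_less_iff_conj min.cobounded1 min.cobounded2)
    define a where "a = x - t *\<^sub>R axis i 1"
    define b where "b = x + t *\<^sub>R axis i 1"
    have "a \<in> unit_cube" "b \<in> unit_cube"
      using x_cube t by (auto simp: unit_cube_def a_def b_def axis_def)
    moreover have "a \<noteq> b"
      using t by (auto simp: a_def b_def vec_eq_iff axis_def)
    moreover have "x \<in> open_segment a b"
    proof -
      have "x = (1 - 1 / 2) *\<^sub>R a + (1 / 2) *\<^sub>R b"
        by (simp add: a_def b_def vec_eq_iff algebra_simps)
      then show ?thesis
        using \<open>a \<noteq> b\<close> unfolding in_segment(2) by (intro conjI exI[of _ "1 / 2"]) auto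
    qed
    ultimately show False
      using extreme by blast
  qed
next
  assume x01: "\<forall>i. x $ i = 0 \<or> x $ i = 1"
  have "x \<notin> open_segment a b" if "a \<in> unit_cube" "b \<in> unit_cube" for a b
  proof
    assume "x \<in> open_segment a b"
    then obtain u where "a \<noteq> b" "0 < u" "u < 1" and x_eq: "x = (1 - u) *\<^sub>R a + u *\<^sub>R b"
      unfolding in_segment(2) by blast
    moreover have "a $ i = b $ i" for i
    proof -
      have "0 \<le> a $ i" "a $ i \<le> 1" "0 \<le> b $ i" "b $ i \<le> 1"
        using that by (auto simp: unit_cube_def)
      then have terms: "0 \<le> (1 - u) * a $ i" "0 \<le> u * b $ i" "(1 - u) * a $ i \<le> 1 - u" "u * b $ i \<le> u"
        using \<open>0 < u\<close> \<open>u < 1\<close> by (simp_all add: mult_left_le)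
      have x_i: "x $ i = (1 - u) * a $ i + u * b $ i"
        using x_eq by simp
      consider "x $ i = 0" | "x $ i = 1"
        using x01 by blast
      then show ?thesis
      proof cases
        case 1
        then have "(1 - u) * a $ i = 0" "u * b $ i = 0"
          using terms x_i by linarith+
        then show ?thesis
          using \<open>0 < u\<close> \<open>u < 1\<close> by simp
      next
        case 2
        then have "(1 - u) * a $ i = 1 - u" "u * b $ i = u"
          using terms x_i by linarith+
        then show ?thesis
          using \<open>0 < u\<close> \<open>u < 1\<close> by simp
      qed
    qed
    ultimately show False
      by (simp add: vec_eq_iff)
  qed
  moreover have "0 \<le> x $ i \<and> x $ i \<le> 1" for i
    using x01[rule_format, of i] by auto
  then have "x \<in> unit_cube"
    by (simp add: unit_cube_def)
  ultimately show "x \<in> ver unit_cube"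
    by (auto simp: ver_def extreme_point_of_def)
qed

lemma ver_subset: "ver P \<subseteq> P"
  by (auto simp: ver_def extreme_point_of_def)

lemma homot_eq_affinity:
  "homot \<sigma> \<Omega> = (\<lambda>x. (center_of_gravity \<Omega> - \<sigma> *\<^sub>R center_of_gravity \<Omega>) + \<sigma> *\<^sub>R x) ` \<Omega>"
  unfolding homot_def by (intro image_cong refl) (simp add: algebra_simps)

lemma nondeg_simplex_iff: "nondeg_simplex S \<longleftrightarrow> (\<exists>V. simplex_frame V \<and> S = convex hull V)"
  by (auto simp: nondeg_simplex_def simplex_frame_def)

lemma sum_min_barycentric_axis_le:
  fixes V :: "(real ^ 'n) set"
  assumes "simplex_frame V" "V \<subseteq> unit_cube"
  shows "(\<Sum>v\<in>V. min (barycentric V (axis i 1) v - barycentric V 0 v) 0) \<le> -1"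
proof -
  interpret simplex_frame V by fact
  define d where "d v = barycentric V (axis i 1) v - barycentric V 0 v" for v
  have "1 = (\<Sum>v\<in>V. d v *\<^sub>R v) $ i"
    by (simp add: d_def scaleR_diff_left sum_subtractf barycentric_combination)
  also have "\<dots> = (\<Sum>v\<in>V. d v * v $ i)"
    by simp
  also have "\<dots> \<le> (\<Sum>v\<in>V. d v - min (d v) 0)"
  proof (rule sum_mono)
    fix v assume "v \<in> V"
    then have "0 \<le> v $ i" "v $ i \<le> 1"
      using assms(2) by (auto simp: unit_cube_def)
    then show "d v * v $ i \<le> d v - min (d v) 0"
      by (cases "d v < 0") (auto simp: mult_left_le mult_nonpos_nonneg)
  qed
  also have "\<dots> = - (\<Sum>v\<in>V. min (d v) 0)"
    by (simp add: d_def sum_subtractf barycentric_sum)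
  finally show ?thesis
    by (simp add: d_def)
qed

text \<open>Write \<open>L\<^sub>v\<close> for the linear part of the barycentric coordinate of the vertex \<open>v\<close>. The cube
  vertex \<open>q\<^sub>v\<close> minimising \<open>L\<^sub>v\<close> is of the form \<open>a + \<sigma> y\<close> with \<open>y \<in> S\<close>, so
  \<open>L\<^sub>v q\<^sub>v \<ge> L\<^sub>v a - \<sigma> \<lambda>\<^sub>v(0)\<close>; summing over \<open>v\<close> gives \<open>-\<sigma> \<le> \<Sum>\<^sub>i \<Sum>\<^sub>v min (L\<^sub>v e\<^sub>i) 0 \<le> -n\<close>.\<close>
lemma dim_le_scale_if_unit_cube_in_simplex:
  fixes V :: "(real ^ 'n) set"
  assumes "simplex_frame V" "convex hull V \<subseteq> unit_cube" "\<sigma> > 0"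
    and "unit_cube \<subseteq> (\<lambda>x. a + \<sigma> *\<^sub>R x) ` (convex hull V)"
  shows "real CARD('n) \<le> \<sigma>"
proof -
  interpret simplex_frame V by fact
  define L where "L v x = barycentric V x v - barycentric V 0 v" for v x
  define d where "d v i = L v (axis i 1)" for v i
  have corner: "L v a - \<sigma> * barycentric V 0 v \<le> (\<Sum>i\<in>UNIV. min (d v i) 0)" if "v \<in> V" for v
  proof -
    have lin: "linear (L v)"
      unfolding L_def by (rule linear_barycentric[OF that])
    define q where "q = (\<chi> i. if d v i < 0 then 1 else (0 :: real))"
    have "q \<in> unit_cube"
      by (simp add: q_def unit_cube_def)
    then obtain y where y: "y \<in> convex hull V" "q = a + \<sigma> *\<^sub>R y"
      using assms(4) by auto
    have "L v q = L v a + \<sigma> * L v y"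
      using linear_add[OF lin, of a "\<sigma> *\<^sub>R y"] linear_scale[OF lin, of \<sigma> y] y(2) by simp
    moreover have "L v q = L v (\<Sum>i\<in>UNIV. q $ i *\<^sub>R axis i 1)"
      using basis_expansion[of q] by (simp add: scalar_mult_eq_scaleR)
    then have "L v q = (\<Sum>i\<in>UNIV. q $ i * d v i)"
      by (simp add: linear_sum[OF lin] linear_scale[OF lin] d_def o_def)
    then have "L v q = (\<Sum>i\<in>UNIV. min (d v i) 0)"
      by (auto simp: q_def intro!: sum.cong)
    moreover have "0 \<le> barycentric V y v"
      using y(1) that by (simp add: convex_hull_frame)
    ultimately show ?thesis
      using assms(3) by (simp add: L_def algebra_simps)
  qed
  have "- \<sigma> = (\<Sum>v\<in>V. L v a - \<sigma> * barycentric V 0 v)"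
    by (simp add: L_def sum_subtractf barycentric_sum flip: sum_distrib_left)
  also have "\<dots> \<le> (\<Sum>v\<in>V. \<Sum>i\<in>UNIV. min (d v i) 0)"
    by (rule sum_mono) (rule corner)
  also have "\<dots> = (\<Sum>i\<in>UNIV. \<Sum>v\<in>V. min (d v i) 0)"
    by (rule sum.swap)
  also have "\<dots> \<le> (\<Sum>i\<in>(UNIV :: 'n set). -1)"
    using sum_min_barycentric_axis_le[OF assms(1) subset_trans[OF hull_subset assms(2)]]
    by (intro sum_mono) (simp add: d_def L_def)
  finally show ?thesis
    by simp
qed

lemma xi_simplex_ge_dim:
  fixes V :: "(real ^ 'n) set"
  assumes "simplex_frame V" "convex hull V \<subseteq> unit_cube"
  shows "real CARD('n) \<le> xi_simplex (convex hull V)"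
proof -
  interpret simplex_frame V by fact
  let ?c = "centroid V"
  obtain r where r: "r > 0" "ball ?c r \<subseteq> convex hull V"
    using ball_centroid_subset by blast
  obtain R where R: "R > 0" "(unit_cube :: (real ^ 'n) set) \<subseteq> ball ?c R"
    using bounded_subset_ballD[of unit_cube] by (auto simp: unit_cube_eq_cbox)
  define \<sigma> where "\<sigma> = 1 + R / r"
  have \<sigma>: "\<sigma> > 1" "R < r * \<sigma>"
    using r R by (simp_all add: \<sigma>_def distrib_left)
  have "unit_cube \<subseteq> homot \<sigma> (convex hull V)"
  proof
    fix q :: "real ^ 'n" assume "q \<in> unit_cube"
    define y where "y = ?c + (1 / \<sigma>) *\<^sub>R (q - ?c)"
    have "dist ?c y = dist ?c q / \<sigma>"
      using \<sigma> by (simp add: y_def dist_norm norm_minus_commute)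
    also have "\<dots> < r"
      using R \<open>q \<in> unit_cube\<close> \<sigma> by (auto simp: divide_less_eq mult.commute)
    finally have "y \<in> convex hull V"
      using r(2) by auto
    moreover have "q = ?c + \<sigma> *\<^sub>R (y - ?c)"
      using \<sigma> by (simp add: y_def)
    ultimately show "q \<in> homot \<sigma> (convex hull V)"
      unfolding homot_def center_of_gravity_simplex[OF assms(1)] by blast
  qed
  then have nonempty: "\<sigma> \<in> {\<sigma>. \<sigma> \<ge> 1 \<and> unit_cube \<subseteq> homot \<sigma> (convex hull V)}"
    using \<sigma> by simp
  show ?thesis
    unfolding xi_simplex_def xi_rel_def
  proof (rule cInf_greatest)
    fix s assume "s \<in> {\<sigma>. \<sigma> \<ge> 1 \<and> unit_cube \<subseteq> homot \<sigma> (convex hull V)}"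
    then show "real CARD('n) \<le> s"
      using dim_le_scale_if_unit_cube_in_simplex[OF assms] by (auto simp: homot_eq_affinity)
  qed (use nonempty in blast)
qed

lemma xi_alpha_simplex_eq_dim:
  fixes V :: "(real ^ 'n) set"
  assumes "simplex_frame V" "convex hull V \<subseteq> unit_cube"
    and "unit_cube \<subseteq> homot (real CARD('n)) (convex hull V)"
  shows "xi_simplex (convex hull V) = real CARD('n)"
    and "alpha_simplex (convex hull V) = real CARD('n)"
proof -
  have "xi_simplex (convex hull V) \<le> real CARD('n)"
    unfolding xi_simplex_def xi_rel_def
    by (rule cInf_lower) (use assms(3) in \<open>auto intro: bdd_belowI[of _ 1]\<close>)
  then show "xi_simplex (convex hull V) = real CARD('n)"
    using xi_simplex_ge_dim[OF assms(1,2)] by simp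
  show "alpha_simplex (convex hull V) = real CARD('n)"
    unfolding alpha_simplex_def alpha_rel_def
  proof (rule cInf_eq_minimum)
    show "real CARD('n) \<in> {\<sigma>. 0 < \<sigma> \<and> (\<exists>t. unit_cube \<subseteq> (\<lambda>x. t + x) ` homot \<sigma> (convex hull V))}"
      using assms(3) by (auto intro!: exI[of _ 0])
    fix s assume "s \<in> {\<sigma>. 0 < \<sigma> \<and> (\<exists>t. unit_cube \<subseteq> (\<lambda>x. t + x) ` homot \<sigma> (convex hull V))}"
    then obtain t where "0 < s" "unit_cube \<subseteq> (\<lambda>x. t + x) ` homot s (convex hull V)"
      by blast
    then show "real CARD('n) \<le> s"
      using dim_le_scale_if_unit_cube_in_simplex[OF assms(1,2) \<open>0 < s\<close>,
          of "t + (center_of_gravity (convex hull V) - s *\<^sub>R center_of_gravity (convex hull V))"]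
      by (simp add: homot_eq_affinity image_image add.assoc)
  qed
qed

lemma xi_n_eq_dim:
  fixes V :: "(real ^ 'n) set"
  assumes "simplex_frame V" "convex hull V \<subseteq> unit_cube" "xi_simplex (convex hull V) = real CARD('n)"
  shows "xi_n TYPE('n) = real CARD('n)"
  unfolding xi_n_def
proof (rule cInf_eq_minimum)
  show "real CARD('n) \<in> {xi_simplex S |S :: (real ^ 'n) set. nondeg_simplex S \<and> S \<subseteq> unit_cube}"
  proof -
    have "nondeg_simplex (convex hull V)"
      using assms(1) by (auto simp: nondeg_simplex_iff)
    then show ?thesis
      using assms(2,3) by (intro CollectI exI[of _ "convex hull V"]) simp
  qed
  fix x assume "x \<in> {xi_simplex S |S :: (real ^ 'n) set. nondeg_simplex S \<and> S \<subseteq> unit_cube}"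
  then show "real CARD('n) \<le> x"
    using xi_simplex_ge_dim by (auto simp: nondeg_simplex_iff)
qed

section \<open>The simplex of a Hadamard matrix\<close>

lemma hadamard_number_normalized:
  fixes m :: nat
  assumes "hadamard_number m" "m > 0"
  obtains G :: "nat \<Rightarrow> nat \<Rightarrow> real" where
    "\<And>k j. k < m \<Longrightarrow> j < m \<Longrightarrow> G k j = 1 \<or> G k j = -1"
    "\<And>k. k < m \<Longrightarrow> G k 0 = 1"
    "\<And>k l. k < m \<Longrightarrow> l < m \<Longrightarrow> (\<Sum>j<m. G k j * G l j) = (if k = l then real m else 0)"
    "\<And>i j. i < m \<Longrightarrow> j < m \<Longrightarrow> (\<Sum>k<m. G k i * G k j) = (if i = j then real m else 0)"
proof -
  obtain H :: "nat \<Rightarrow> nat \<Rightarrow> real" where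
    sign: "\<forall>i<m. \<forall>j<m. H i j = 1 \<or> H i j = -1"
    and rows: "\<forall>i<m. \<forall>k<m. (\<Sum>j<m. H i j * H k j) = (if i = k then real m else 0)"
    and cols: "\<forall>i<m. \<forall>k<m. (\<Sum>j<m. H j i * H j k) = (if i = k then real m else 0)"
    using assms(1) unfolding hadamard_number_def by blast
  have square: "H k j * H k j = 1" if "k < m" "j < m" for k j
  proof -
    have "H k j = 1 \<or> H k j = -1"
      using sign that by blast
    then show ?thesis
      by auto
  qed
  define G where "G k j = H k j * H k 0" for k j
  have "G k j = 1 \<or> G k j = -1" if "k < m" "j < m" for k j
  proof -
    have "H k j = 1 \<or> H k j = -1" "H k 0 = 1 \<or> H k 0 = -1"
      using sign that assms(2) by blast+
    then show ?thesis
      by (auto simp: G_def)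
  qed
  moreover have "G k 0 = 1" if "k < m" for k
    using square that assms(2) by (simp add: G_def)
  moreover have "(\<Sum>j<m. G k j * G l j) = (if k = l then real m else 0)" if "k < m" "l < m" for k l
  proof -
    have "(\<Sum>j<m. G k j * G l j) = (H k 0 * H l 0) * (\<Sum>j<m. H k j * H l j)"
      by (simp add: G_def sum_distrib_left mult_ac)
    then show ?thesis
      using rows square[of k 0] square[of l 0] that assms(2) by auto
  qed
  moreover have "(\<Sum>k<m. G k i * G k j) = (if i = j then real m else 0)" if "i < m" "j < m" for i j
  proof -
    have "(\<Sum>k<m. G k i * G k j) = (\<Sum>k<m. H k i * H k j * (H k 0 * H k 0))"
      by (simp add: G_def mult_ac)
    also have "\<dots> = (\<Sum>k<m. H k i * H k j)"
      using square assms(2) by simp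
    finally show ?thesis
      using cols that by simp
  qed
  ultimately show thesis
    by (rule that)
qed

text \<open>The rows \<open>0, \<dots>, n\<close> of a Hadamard matrix of order \<open>n + 1\<close>, normalised to have first
  entry \<open>1\<close>, with that entry deleted and the remaining columns indexed by \<open>'n\<close>.\<close>
locale hadamard_signs =
  fixes h :: "nat \<Rightarrow> 'n::finite \<Rightarrow> real"
  assumes sign: "k \<le> CARD('n) \<Longrightarrow> h k i = 1 \<or> h k i = -1"
    and rows: "k \<le> CARD('n) \<Longrightarrow> l \<le> CARD('n) \<Longrightarrow>
      (\<Sum>i\<in>UNIV. h k i * h l i) = (if k = l then real CARD('n) else -1)"
    and column_sum: "(\<Sum>k\<le>CARD('n). h k i) = 0"
    and columns: "(\<Sum>k\<le>CARD('n). h k i * h k j) = (if i = j then real CARD('n) + 1 else 0)"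

lemma hadamard_signs_exist:
  assumes "hadamard_number (CARD('n) + 1)"
  obtains h :: "nat \<Rightarrow> 'n::finite \<Rightarrow> real" where "hadamard_signs h"
proof -
  let ?m = "CARD('n) + 1"
  obtain G where sign: "\<And>k j. k < ?m \<Longrightarrow> j < ?m \<Longrightarrow> G k j = 1 \<or> G k j = -1"
    and first: "\<And>k. k < ?m \<Longrightarrow> G k 0 = 1"
    and rows: "\<And>k l. k < ?m \<Longrightarrow> l < ?m \<Longrightarrow> (\<Sum>j<?m. G k j * G l j) = (if k = l then real ?m else 0)"
    and cols: "\<And>i j. i < ?m \<Longrightarrow> j < ?m \<Longrightarrow> (\<Sum>k<?m. G k i * G k j) = (if i = j then real ?m else 0)"
    using hadamard_number_normalized[OF assms] by auto
  obtain e :: "'n \<Rightarrow> nat" where e: "bij_betw e UNIV {..<CARD('n)}"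
    using ex_bij_betw_finite_nat[of "UNIV :: 'n set"] by (auto simp: atLeast0LessThan)
  then have e_less: "e i < CARD('n)" for i
    by (auto simp: bij_betw_def)
  have reindex: "(\<Sum>j<?m. f j) = f 0 + (\<Sum>i\<in>UNIV. f (Suc (e i)))" for f :: "nat \<Rightarrow> real"
    using sum.lessThan_Suc_shift[of f "CARD('n)"] sum.reindex_bij_betw[OF e, of "\<lambda>j. f (Suc j)"] by simp
  have "hadamard_signs (\<lambda>k i. G k (Suc (e i)))"
  proof
    show "G k (Suc (e i)) = 1 \<or> G k (Suc (e i)) = -1" if "k \<le> CARD('n)" for k i
      using sign that e_less by simp
    show "(\<Sum>i\<in>UNIV. G k (Suc (e i)) * G l (Suc (e i))) = (if k = l then real CARD('n) else -1)"
      if "k \<le> CARD('n)" "l \<le> CARD('n)" for k l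
    proof -
      have "k < ?m" "l < ?m"
        using that by simp_all
      then have "1 + (\<Sum>i\<in>UNIV. G k (Suc (e i)) * G l (Suc (e i))) = (if k = l then real ?m else 0)"
        using rows reindex[of "\<lambda>j. G k j * G l j"] first by simp
      then show ?thesis
        by (simp split: if_splits)
    qed
    show "(\<Sum>k\<le>CARD('n). G k (Suc (e i))) = 0" for i
    proof -
      have "(\<Sum>k\<le>CARD('n). G k (Suc (e i))) = (\<Sum>k<?m. G k (Suc (e i)) * G k 0)"
        by (auto simp: first lessThan_Suc_atMost intro!: sum.cong)
      also have "\<dots> = 0"
        using cols[of "Suc (e i)" 0] e_less[of i] by simp
      finally show ?thesis .
    qed
    show "(\<Sum>k\<le>CARD('n). G k (Suc (e i)) * G k (Suc (e j))) = (if i = j then real CARD('n) + 1 else 0)" for i j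
    proof -
      have "e i = e j \<longleftrightarrow> i = j"
        using bij_betw_imp_inj_on[OF e] by (auto simp: inj_on_def)
      then show ?thesis
        using cols[of "Suc (e i)" "Suc (e j)"] e_less[of i] e_less[of j] by (simp add: lessThan_Suc_atMost)
    qed
  qed
  then show thesis
    by (rule that)
qed

definition cube_center :: "real ^ 'n" where
  "cube_center = (\<chi> i. 1 / 2)"

context hadamard_signs
begin

definition vertex :: "nat \<Rightarrow> real ^ 'n" where
  "vertex k = (\<chi> i. (1 - h k i) / 2)"

definition opposite_corner :: "nat \<Rightarrow> real ^ 'n" where
  "opposite_corner k = (\<chi> i. (1 + h k i) / 2)"

definition coord :: "nat \<Rightarrow> real ^ 'n \<Rightarrow> real" where
  "coord k x = (1 + (\<Sum>i\<in>UNIV. h k i * (1 - 2 * x $ i))) / (real CARD('n) + 1)"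

definition vertices :: "(real ^ 'n) set" where
  "vertices = vertex ` {..CARD('n)}"

lemma sum_sign_products: "(\<Sum>k\<le>CARD('n). \<Sum>i\<in>UNIV. h k i * y i) = 0"
proof -
  have "(\<Sum>k\<le>CARD('n). \<Sum>i\<in>UNIV. h k i * y i) = (\<Sum>i\<in>UNIV. \<Sum>k\<le>CARD('n). h k i * y i)"
    by (rule sum.swap)
  also have "\<dots> = (\<Sum>i\<in>UNIV. (\<Sum>k\<le>CARD('n). h k i) * y i)"
    by (simp add: sum_distrib_right)
  finally show ?thesis
    by (simp add: column_sum)
qed

lemma sum_sign_products_column:
  "(\<Sum>k\<le>CARD('n). (\<Sum>i\<in>UNIV. h k i * y i) * h k j) = (real CARD('n) + 1) * y j"
proof -
  have "(\<Sum>k\<le>CARD('n). (\<Sum>i\<in>UNIV. h k i * y i) * h k j)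
      = (\<Sum>k\<le>CARD('n). \<Sum>i\<in>UNIV. y i * (h k i * h k j))"
    by (simp add: sum_distrib_left sum_distrib_right mult_ac)
  also have "\<dots> = (\<Sum>i\<in>UNIV. \<Sum>k\<le>CARD('n). y i * (h k i * h k j))"
    by (rule sum.swap)
  also have "\<dots> = (\<Sum>i\<in>UNIV. y i * (\<Sum>k\<le>CARD('n). h k i * h k j))"
    by (simp add: sum_distrib_left)
  also have "\<dots> = (\<Sum>i\<in>UNIV. if i = j then (real CARD('n) + 1) * y i else 0)"
    by (intro sum.cong) (auto simp: columns)
  finally show ?thesis
    by simp
qed

lemma coord_sum: "(\<Sum>k\<le>CARD('n). coord k x) = 1"
  using sum_sign_products[of "\<lambda>i. 1 - 2 * x $ i"]
  by (simp add: coord_def sum.distrib flip: sum_divide_distrib)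

lemma coord_combination: "(\<Sum>k\<le>CARD('n). coord k x *\<^sub>R vertex k) = x"
proof (subst vec_eq_iff, rule allI)
  fix j
  define y where "y i = 1 - 2 * x $ i" for i
  define S where "S k = (\<Sum>i\<in>UNIV. h k i * y i)" for k
  define m where "m = real CARD('n) + 1"
  have "(coord k x *\<^sub>R vertex k) $ j = (1 + S k) * (1 - h k j) / (2 * m)" for k
    by (simp add: coord_def vertex_def S_def y_def m_def)
  then have "(\<Sum>k\<le>CARD('n). coord k x *\<^sub>R vertex k) $ j = (\<Sum>k\<le>CARD('n). (1 + S k) * (1 - h k j)) / (2 * m)"
    by (simp add: sum_divide_distrib)
  also have "(\<Sum>k\<le>CARD('n). (1 + S k) * (1 - h k j)) = (\<Sum>k\<le>CARD('n). 1 - h k j + S k - S k * h k j)"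
    by (simp add: algebra_simps)
  also have "\<dots> = m - m * y j"
    by (simp add: sum.distrib sum_subtractf S_def sum_sign_products sum_sign_products_column column_sum m_def)
  also have "(m - m * y j) / (2 * m) = x $ j"
    by (simp add: m_def y_def field_simps)
  finally show "(\<Sum>k\<le>CARD('n). coord k x *\<^sub>R vertex k) $ j = x $ j" .
qed

lemma coord_vertex:
  assumes "k \<le> CARD('n)" "l \<le> CARD('n)"
  shows "coord k (vertex l) = (if k = l then 1 else 0)"
proof -
  have "coord k (vertex l) = (1 + (\<Sum>i\<in>UNIV. h k i * h l i)) / (real CARD('n) + 1)"
    by (simp add: coord_def vertex_def diff_divide_distrib)
  then show ?thesis
    using rows[OF assms] by simp
qed

lemma inj_on_vertex: "inj_on vertex {..CARD('n)}"
proof (rule inj_onI)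
  fix k l assume k: "k \<in> {..CARD('n)}" and l: "l \<in> {..CARD('n)}" and "vertex k = vertex l"
  then have "coord k (vertex l) = 1"
    using coord_vertex[of k k] by simp
  then show "k = l"
    using coord_vertex[of k l] k l by (simp split: if_splits)
qed

lemma card_vertices: "card vertices = CARD('n) + 1"
  by (simp add: vertices_def card_image[OF inj_on_vertex])

lemma ball_vertices: "(\<forall>v\<in>vertices. P v) \<longleftrightarrow> (\<forall>k\<le>CARD('n). P (vertex k))"
  by (auto simp: vertices_def)

lemma vertex_weights:
  "\<exists>u. (\<forall>k\<le>CARD('n). u (vertex k) = coord k x) \<and> sum u vertices = 1 \<and> (\<Sum>w\<in>vertices. u w *\<^sub>R w) = x"
proof (intro exI conjI)
  let ?u = "\<lambda>w. coord (inv_into {..CARD('n)} vertex w) x"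
  show u: "\<forall>k\<le>CARD('n). ?u (vertex k) = coord k x"
    using inv_into_f_f[OF inj_on_vertex] by simp
  show "sum ?u vertices = 1" "(\<Sum>w\<in>vertices. ?u w *\<^sub>R w) = x"
    using u by (simp_all add: vertices_def sum.reindex[OF inj_on_vertex] coord_sum coord_combination)
qed

lemma simplex_frame_vertices: "simplex_frame vertices"
proof
  show "finite vertices"
    by (simp add: vertices_def)
  have "x \<in> affine hull vertices" for x
  proof -
    obtain u where "sum u vertices = 1" "(\<Sum>w\<in>vertices. u w *\<^sub>R w) = x"
      using vertex_weights[of x] by blast
    then show ?thesis
      unfolding affine_hull_finite[OF \<open>finite vertices\<close>] by blast
  qed
  then have "affine hull vertices = UNIV"
    by auto
  then have "aff_dim vertices = int CARD('n)"
    using aff_dim_affine_hull[of vertices] by simp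
  then show "\<not> affine_dependent vertices"
    using card_vertices \<open>finite vertices\<close> by (simp add: affine_independent_iff_card)
  show "card vertices = DIM(real ^ 'n) + 1"
    by (simp add: card_vertices)
qed

sublocale simplex_frame vertices
  by (rule simplex_frame_vertices)

lemma barycentric_vertices:
  assumes "k \<le> CARD('n)"
  shows "barycentric vertices x (vertex k) = coord k x"
proof -
  obtain u where "\<forall>k\<le>CARD('n). u (vertex k) = coord k x"
    and "sum u vertices = 1" "(\<Sum>w\<in>vertices. u w *\<^sub>R w) = x"
    using vertex_weights[of x] by blast
  then show ?thesis
    using barycentric_unique assms by (simp add: vertices_def)
qed

lemma mem_simplex_iff: "x \<in> convex hull vertices \<longleftrightarrow> (\<forall>k\<le>CARD('n). 0 \<le> coord k x)"
  by (simp add: convex_hull_frame ball_vertices barycentric_vertices)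

lemma vertex_coordinate: "k \<le> CARD('n) \<Longrightarrow> vertex k $ i = 0 \<or> vertex k $ i = 1"
  using sign[of k i] by (auto simp: vertex_def)

lemma simplex_subset_unit_cube: "convex hull vertices \<subseteq> unit_cube"
proof (rule hull_minimal)
  have "0 \<le> vertex k $ i \<and> vertex k $ i \<le> 1" if "k \<le> CARD('n)" for k i
    using vertex_coordinate[OF that, of i] by auto
  then show "vertices \<subseteq> unit_cube"
    by (auto simp: vertices_def unit_cube_def)
qed (rule convex_unit_cube)

lemma ver_simplex_subset: "ver (convex hull vertices) \<subseteq> ver unit_cube"
proof
  fix u assume "u \<in> ver (convex hull vertices)"
  then have "u \<in> vertices"
    using extreme_point_of_convex_hull by (auto simp: ver_def)
  then show "u \<in> ver unit_cube"
    using vertex_coordinate by (auto simp: vertices_def mem_ver_unit_cube)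
qed

lemma center_of_gravity_vertices: "center_of_gravity (convex hull vertices) = cube_center"
proof -
  have "(\<Sum>k\<le>CARD('n). vertex k) $ i = (real CARD('n) + 1) / 2" for i
  proof -
    have "(\<Sum>k\<le>CARD('n). vertex k) $ i = (\<Sum>k\<le>CARD('n). 1 - h k i) / 2"
      by (simp add: vertex_def sum_divide_distrib)
    then show ?thesis
      by (simp add: sum_subtractf column_sum)
  qed
  moreover have "\<Sum>vertices = (\<Sum>k\<le>CARD('n). vertex k)"
    by (simp add: vertices_def sum.reindex[OF inj_on_vertex])
  ultimately have "centroid vertices = cube_center"
    by (simp add: centroid_def card_vertices cube_center_def vec_eq_iff)
  then show ?thesis
    by (simp add: center_of_gravity_simplex[OF simplex_frame_vertices])
qed

lemma coord_homothety:
  "coord k (cube_center + t *\<^sub>R (x - cube_center))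
     = 1 / (real CARD('n) + 1) + t * (coord k x - 1 / (real CARD('n) + 1))"
proof -
  define S where "S = (\<Sum>i\<in>UNIV. h k i * (1 - 2 * x $ i))"
  define m where "m = real CARD('n) + 1"
  have "(\<Sum>i\<in>UNIV. h k i * (1 - 2 * (cube_center + t *\<^sub>R (x - cube_center)) $ i)) = t * S"
    by (simp add: S_def sum_distrib_left cube_center_def algebra_simps)
  then have "coord k (cube_center + t *\<^sub>R (x - cube_center)) = (1 + t * S) / m"
    by (simp add: coord_def m_def)
  moreover have "coord k x = (1 + S) / m"
    by (simp add: coord_def S_def m_def)
  moreover have "m > 0"
    by (simp add: m_def)
  ultimately show ?thesis
    unfolding m_def[symmetric] by (simp add: field_simps)
qed

lemma homot_simplex:
  "homot \<sigma> (convex hull vertices) = (\<lambda>x. cube_center + \<sigma> *\<^sub>R (x - cube_center)) ` (convex hull vertices)"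
  by (simp add: homot_def center_of_gravity_vertices)

lemma mem_homot_simplex_iff:
  assumes "\<sigma> > 0"
  shows "x \<in> homot \<sigma> (convex hull vertices) \<longleftrightarrow>
    (\<forall>k\<le>CARD('n). (1 - \<sigma>) / (real CARD('n) + 1) \<le> coord k x)"
proof -
  let ?m = "real CARD('n) + 1"
  have "x \<in> homot \<sigma> (convex hull vertices) \<longleftrightarrow> cube_center + (1 / \<sigma>) *\<^sub>R (x - cube_center) \<in> convex hull vertices"
  proof
    assume "x \<in> homot \<sigma> (convex hull vertices)"
    then obtain y where "y \<in> convex hull vertices" "x = cube_center + \<sigma> *\<^sub>R (y - cube_center)"
      by (auto simp: homot_simplex)
    then show "cube_center + (1 / \<sigma>) *\<^sub>R (x - cube_center) \<in> convex hull vertices"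
      using assms by simp
  next
    assume "cube_center + (1 / \<sigma>) *\<^sub>R (x - cube_center) \<in> convex hull vertices"
    moreover have "x = cube_center + \<sigma> *\<^sub>R ((cube_center + (1 / \<sigma>) *\<^sub>R (x - cube_center)) - cube_center)"
      using assms by simp
    ultimately show "x \<in> homot \<sigma> (convex hull vertices)"
      unfolding homot_simplex by blast
  qed
  also have "\<dots> \<longleftrightarrow> (\<forall>k\<le>CARD('n). 0 \<le> 1 / ?m + (1 / \<sigma>) * (coord k x - 1 / ?m))"
    by (simp add: mem_simplex_iff coord_homothety)
  also have "\<dots> \<longleftrightarrow> (\<forall>k\<le>CARD('n). (1 - \<sigma>) / ?m \<le> coord k x)"
  proof -
    have rescale: "0 \<le> 1 / m + (1 / \<sigma>) * (c - 1 / m) \<longleftrightarrow> (1 - \<sigma>) / m \<le> c" if "m > 0" for m c :: real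
    proof -
      have "0 \<le> 1 / m + (1 / \<sigma>) * (c - 1 / m) \<longleftrightarrow> 0 \<le> (\<sigma> * m) * (1 / m + (1 / \<sigma>) * (c - 1 / m))"
        using mult_le_cancel_left_pos[of "\<sigma> * m" 0] assms that by simp
      also have "(\<sigma> * m) * (1 / m + (1 / \<sigma>) * (c - 1 / m)) = m * c - (1 - \<sigma>)"
        using assms that by (simp add: field_simps)
      finally show ?thesis
        using that by (simp add: pos_divide_le_eq mult.commute)
    qed
    show ?thesis
      using rescale[of ?m] by simp
  qed
  finally show ?thesis .
qed

lemma coord_ge_on_unit_cube:
  assumes "x \<in> unit_cube" "k \<le> CARD('n)"
  shows "(1 - real CARD('n)) / (real CARD('n) + 1) \<le> coord k x"
proof -
  have "(\<Sum>i\<in>(UNIV :: 'n set). -1) \<le> (\<Sum>i\<in>UNIV. h k i * (1 - 2 * x $ i))"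
  proof (rule sum_mono)
    fix i
    have "0 \<le> x $ i" "x $ i \<le> 1"
      using assms(1) by (auto simp: unit_cube_def)
    then show "-1 \<le> h k i * (1 - 2 * x $ i)"
      using sign[OF assms(2), of i] by auto
  qed
  then show ?thesis
    by (simp add: coord_def divide_right_mono)
qed

lemma coord_eq_min_iff:
  assumes "x \<in> ver unit_cube" "k \<le> CARD('n)"
  shows "coord k x = (1 - real CARD('n)) / (real CARD('n) + 1) \<longleftrightarrow> x = opposite_corner k"
proof -
  have x01: "x $ i = 0 \<or> x $ i = 1" for i
    using assms(1) by (simp add: mem_ver_unit_cube)
  have terms: "0 \<le> h k i * (1 - 2 * x $ i) + 1" "h k i * (1 - 2 * x $ i) + 1 = 0 \<longleftrightarrow> x $ i = opposite_corner k $ i" for i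
    using sign[OF assms(2), of i] x01[of i] by (elim disjE; simp add: opposite_corner_def)+
  define S where "S = (\<Sum>i\<in>UNIV. h k i * (1 - 2 * x $ i))"
  have "coord k x = (1 - real CARD('n)) / (real CARD('n) + 1) \<longleftrightarrow> 1 + S = 1 - real CARD('n)"
    by (simp add: coord_def S_def)
  also have "\<dots> \<longleftrightarrow> S + real CARD('n) = 0"
    by arith
  also have "\<dots> \<longleftrightarrow> (\<Sum>i\<in>UNIV. h k i * (1 - 2 * x $ i) + 1) = 0"
    by (simp add: S_def sum.distrib)
  also have "\<dots> \<longleftrightarrow> (\<forall>i. x $ i = opposite_corner k $ i)"
    using terms by (simp add: sum_nonneg_eq_0_iff)
  finally show ?thesis
    by (simp add: vec_eq_iff)
qed

lemma unit_cube_subset_homot: "unit_cube \<subseteq> homot (real CARD('n)) (convex hull vertices)"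
proof
  fix x :: "real ^ 'n" assume "x \<in> unit_cube"
  then show "x \<in> homot (real CARD('n)) (convex hull vertices)"
    unfolding mem_homot_simplex_iff[OF of_nat_0_less_iff[THEN iffD2, OF zero_less_card_finite]]
    using coord_ge_on_unit_cube by blast
qed

lemma dist_vertex:
  assumes "k \<le> CARD('n)" "l \<le> CARD('n)" "k \<noteq> l"
  shows "dist (vertex k) (vertex l) = sqrt ((real CARD('n) + 1) / 2)"
proof -
  have "(vertex k - vertex l) \<bullet> (vertex k - vertex l) = (\<Sum>i\<in>UNIV. (2 - 2 * (h k i * h l i)) / 4)"
  proof (unfold inner_vec_def, rule sum.cong)
    fix i
    have "h k i * h k i = 1" "h l i * h l i = 1"
      using sign[OF assms(1), of i] sign[OF assms(2), of i] by auto
    then have square: "(h l i - h k i) * (h l i - h k i) = 2 - 2 * (h k i * h l i)"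
      by (simp add: algebra_simps)
    have "(vertex k - vertex l) $ i = (h l i - h k i) / 2"
      by (simp add: vertex_def diff_divide_distrib)
    then show "(vertex k - vertex l) $ i \<bullet> (vertex k - vertex l) $ i = (2 - 2 * (h k i * h l i)) / 4"
      unfolding inner_real_def by (simp only: times_divide_times_eq square)
  qed simp
  also have "\<dots> = (2 * real CARD('n) - 2 * (\<Sum>i\<in>UNIV. h k i * h l i)) / 4"
    by (simp add: sum_subtractf sum_distrib_left flip: sum_divide_distrib)
  also have "\<dots> = (real CARD('n) + 1) / 2"
    using rows[OF assms(1,2)] assms(3) by simp
  finally show ?thesis
    by (simp add: dist_norm norm_eq_sqrt_inner)
qed

lemma regular_simplex_vertices: "regular_simplex (convex hull vertices)"
  unfolding regular_simplex_def nondeg_simplex_iff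
proof (intro conjI exI ballI impI)
  show "simplex_frame vertices" "convex hull vertices = convex hull vertices"
    by (simp_all add: simplex_frame_vertices)
  fix u v assume "u \<in> ver (convex hull vertices)" "v \<in> ver (convex hull vertices)" "u \<noteq> v"
  moreover have "ver (convex hull vertices) \<subseteq> vertices"
    using extreme_point_of_convex_hull by (auto simp: ver_def)
  ultimately have "u \<in> vertices" "v \<in> vertices"
    by blast+
  then obtain k l where "k \<le> CARD('n)" "l \<le> CARD('n)" "u = vertex k" "v = vertex l"
    unfolding vertices_def by blast
  then show "dist u v = sqrt ((real CARD('n) + 1) / 2)"
    using dist_vertex \<open>u \<noteq> v\<close> by blast
qed

lemma axial_diam_simplex: "axial_diam i (convex hull vertices) = 1"
proof -
  let ?D = "{dist a b | a b. closed_segment a b \<subseteq> convex hull vertices \<and> (\<forall>j. j \<noteq> i \<longrightarrow> a $ j = b $ j)}"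
  have along_axis: "x - y = (x $ i - y $ i) *\<^sub>R axis i 1" if "\<forall>j. j \<noteq> i \<longrightarrow> x $ j = y $ j" for x y :: "real ^ 'n"
    using that by (auto simp: vec_eq_iff axis_def)
  define a :: "real ^ 'n" where "a = (\<chi> j. if j = i then 0 else 1 / 2)"
  define b :: "real ^ 'n" where "b = (\<chi> j. if j = i then 1 else 1 / 2)"
  have coord_axis: "coord k (\<chi> j. if j = i then t else 1 / 2) = (1 + h k i * (1 - 2 * t)) / (real CARD('n) + 1)" for k t
  proof -
    have "(\<Sum>j\<in>UNIV. h k j * (1 - 2 * (\<chi> j. if j = i then t else 1 / 2) $ j))
        = (\<Sum>j\<in>UNIV. if j = i then h k i * (1 - 2 * t) else 0)"
      by (intro sum.cong) auto
    then show ?thesis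
      by (simp add: coord_def)
  qed
  have axis_point: "(\<chi> j. if j = i then t else 1 / 2) \<in> convex hull vertices" if "t = 0 \<or> t = 1" for t
  proof (unfold mem_simplex_iff coord_axis, intro allI impI)
    fix k assume "k \<le> CARD('n)"
    then have "h k i = 1 \<or> h k i = -1"
      by (rule sign)
    then show "0 \<le> (1 + h k i * (1 - 2 * t)) / (real CARD('n) + 1)"
      using that by auto
  qed
  have "a \<in> convex hull vertices" "b \<in> convex hull vertices"
    unfolding a_def b_def by (simp_all add: axis_point)
  then have "closed_segment a b \<subseteq> convex hull vertices"
    by (intro closed_segment_subset convex_convex_hull)
  moreover have "\<forall>j. j \<noteq> i \<longrightarrow> a $ j = b $ j"
    by (simp add: a_def b_def)
  moreover have "dist a b = 1"
    using along_axis[of a b] calculation(2) by (simp add: dist_norm a_def b_def norm_axis_1)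
  ultimately have "1 \<in> ?D"
    by force
  moreover have "d \<le> 1" if "d \<in> ?D" for d
  proof -
    obtain x y where xy: "d = dist x y" "closed_segment x y \<subseteq> convex hull vertices" "\<forall>j. j \<noteq> i \<longrightarrow> x $ j = y $ j"
      using \<open>d \<in> ?D\<close> by blast
    then have "x \<in> unit_cube" "y \<in> unit_cube"
      using simplex_subset_unit_cube ends_in_segment by blast+
    then have "0 \<le> x $ i" "x $ i \<le> 1" "0 \<le> y $ i" "y $ i \<le> 1"
      by (auto simp: unit_cube_def)
    then have "\<bar>x $ i - y $ i\<bar> \<le> 1"
      by (simp add: abs_le_iff)
    then show ?thesis
      using along_axis[OF xy(3)] xy(1) by (simp add: dist_norm norm_axis_1)
  qed
  ultimately show ?thesis
    unfolding axial_diam_def by (intro cSup_eq_maximum) blast+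
qed

lemma facet_of_homot_simplex:
  assumes "F facet_of homot (real CARD('n)) (convex hull vertices)"
  obtains k where "k \<le> CARD('n)"
    and "F = {y \<in> homot (real CARD('n)) (convex hull vertices).
               coord k y = (1 - real CARD('n)) / (real CARD('n) + 1)}"
proof -
  let ?n = "real CARD('n)" and ?m = "real CARD('n) + 1"
  define g :: "real ^ 'n \<Rightarrow> real ^ 'n" where "g = (\<lambda>x. cube_center + ?n *\<^sub>R (x - cube_center))"
  have g_affinity: "g = (\<lambda>x. (cube_center - ?n *\<^sub>R cube_center) + ?n *\<^sub>R x)"
    by (simp add: g_def fun_eq_iff algebra_simps)
  have hull_g: "convex hull (g ` X) = g ` (convex hull X)" for X
    unfolding g_affinity by (rule convex_hull_affinity)
  have homot_g: "homot ?n (convex hull vertices) = g ` (convex hull vertices)"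
    by (simp add: homot_simplex g_def)
  have "\<not> affine_dependent (g ` vertices)"
    unfolding g_affinity by (rule affine_independent_affinity[OF independent_frame]) simp
  moreover have "F facet_of convex hull (g ` vertices)"
    using assms by (simp only: homot_g hull_g)
  ultimately obtain u where "u \<in> g ` vertices" and F: "F = convex hull (g ` vertices - {u})"
    using facet_of_convex_hull_affine_independent by blast
  then obtain k where k: "k \<le> CARD('n)" and u: "u = g (vertex k)"
    by (auto simp: vertices_def)
  have "inj g"
    by (rule injI) (simp add: g_def)
  then have "g ` vertices - {u} = g ` (vertices - {vertex k})"
    using image_set_diff[of g vertices "{vertex k}"] u by simp
  then have "F = g ` (convex hull (vertices - {vertex k}))"
    by (simp only: F hull_g)
  also have "convex hull (vertices - {vertex k}) = {x \<in> convex hull vertices. coord k x = 0}"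
    using convex_hull_frame_minus[of "vertex k"] barycentric_vertices[OF k] k by (simp add: vertices_def)
  also have "g ` {x \<in> convex hull vertices. coord k x = 0} = {y \<in> g ` (convex hull vertices). coord k y = (1 - ?n) / ?m}"
  proof -
    have "coord k (g x) = ?n * coord k x + (1 - ?n) / ?m" for x
      using coord_homothety[of k ?n x] by (simp add: g_def field_simps)
    then have "coord k (g x) = (1 - ?n) / ?m \<longleftrightarrow> coord k x = 0" for x
      by simp
    then show ?thesis
      by blast
  qed
  finally show thesis
    using that k homot_g by simp
qed

lemma facet_of_homot_simplex_inter_ver:
  assumes "F facet_of homot (real CARD('n)) (convex hull vertices)"
  obtains k where "F \<inter> ver unit_cube = {opposite_corner k}"
proof -
  obtain k where k: "k \<le> CARD('n)"
    and F: "F = {y \<in> homot (real CARD('n)) (convex hull vertices).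
                  coord k y = (1 - real CARD('n)) / (real CARD('n) + 1)}"
    using facet_of_homot_simplex[OF assms] by blast
  have "opposite_corner k \<in> ver unit_cube"
    using sign[OF k] by (fastforce simp: mem_ver_unit_cube opposite_corner_def)
  moreover have "ver unit_cube \<subseteq> homot (real CARD('n)) (convex hull vertices)"
    using ver_subset unit_cube_subset_homot by blast
  ultimately have "F \<inter> ver unit_cube = {opposite_corner k}"
    using coord_eq_min_iff[OF _ k] unfolding F by blast
  then show thesis
    by (rule that)
qed

lemma circumscribed_homot_simplex: "circumscribed (homot (real CARD('n)) (convex hull vertices)) unit_cube"
  unfolding circumscribed_def
proof (intro conjI allI impI unit_cube_subset_homot)
  fix F assume "F facet_of homot (real CARD('n)) (convex hull vertices)"
  then obtain k where "F \<inter> ver unit_cube = {opposite_corner k}"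
    by (rule facet_of_homot_simplex_inter_ver)
  then show "F \<inter> unit_cube \<noteq> {}"
    using ver_subset by blast
qed

end

theorem theorem2p1:
  assumes "hadamard_number (CARD('n) + 1)"
  shows "\<exists>S :: (real ^ 'n) set.
     regular_simplex S \<and> S \<subseteq> unit_cube \<and>
     ver S \<subseteq> ver (unit_cube :: (real ^ 'n) set) \<and>
     xi_n TYPE('n) = xi_simplex S \<and> xi_simplex S = alpha_simplex S \<and>
     alpha_simplex S = real CARD('n) \<and>
     (\<forall>i. axial_diam i S = 1) \<and>
     circumscribed (homot (real CARD('n)) S) (unit_cube :: (real ^ 'n) set) \<and>
     (\<forall>F. F facet_of homot (real CARD('n)) S \<longrightarrow>
        card (F \<inter> ver (unit_cube :: (real ^ 'n) set)) = 1)"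
proof -
  obtain h :: "nat \<Rightarrow> 'n \<Rightarrow> real" where "hadamard_signs h"
    using hadamard_signs_exist[OF assms] by blast
  then interpret hadamard_signs h .
  have xi: "xi_simplex (convex hull vertices) = real CARD('n)"
    and alpha: "alpha_simplex (convex hull vertices) = real CARD('n)"
    using xi_alpha_simplex_eq_dim[OF simplex_frame_vertices simplex_subset_unit_cube unit_cube_subset_homot]
    by auto
  have "xi_n TYPE('n) = real CARD('n)"
    by (rule xi_n_eq_dim[OF simplex_frame_vertices simplex_subset_unit_cube xi])
  moreover have "card (F \<inter> ver unit_cube) = 1"
    if "F facet_of homot (real CARD('n)) (convex hull vertices)" for F
    by (rule facet_of_homot_simplex_inter_ver[OF that]) simp
  ultimately show ?thesis
    using regular_simplex_vertices simplex_subset_unit_cube ver_simplex_subset xi alpha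
      axial_diam_simplex circumscribed_homot_simplex
    by (intro exI[of _ "convex hull vertices"]) simp
qed

end
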